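(* Let $n\ge 1$ and let $\vec v=(v_1,\dots,v_n)\in\mathbb N_b^n$. For $1\le j\le n$ let $q_j=\#\{i:\ v_i=j\}$. Then there is exactly one complete expression in the letters $x_1,\dots,x_{n+1}$ in which, for every $j$, exactly $q_j$ left parentheses stand immediately to the left of $x_j$ (and no left parenthesis stands immediately to the left of $x_{n+1}$). Sending $\vec v$ to the tree of $Y_n$ corresponding to this complete expression defines a map $\mathrm{Tree}:\mathbb N_b^n\to Y_n$, and this map is surjective.
   Context: $\mathbb N_b^n=\{(v_1,\dots,v_n)\in\mathbb N^n:\ 1\le v_i\le i \text{ for all } i\}$. For $n\ge0$, $Y_n$ denotes the set of planar rooted binary trees with $n$ internal (trivalent) vertices, hence $n+1$ leaves, up to isotopy; $Y_0$ consists of the single trivial tree $|$. For $\tau_1\in Y_p,\tau_2\in Y_q$ the grafting $\tau_1\vee\tau_2\in Y_{p+q+1}$ is the tree with a new root vertex whose left subtree is $\tau_1$ and whose right subtree is $\tau_2$. A complete expression in the letters $x_1,\dots,x_{n+1}$ is a full binary parenthesization of the word $x_1x_2\cdots x_{n+1}$ in which every product of two factors, including the outermost one, is enclosed in a pair of parentheses (so there are $n$ pairs). Trees of $Y_n$ correspond bijectively to complete expressions: $|\mapsto x_1$, and $\tau_1\vee\tau_2\mapsto(E_1E_2)$ where $E_1,E_2$ are the complete expressions of $\tau_1,\tau_2$, with letters relabelled consecutively from left to right. *)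

theory Defs
  imports Main
begin

datatype ptree = Leaf | Node ptree ptree

fun internal :: "ptree \<Rightarrow> nat" where
  "internal Leaf = 0"
| "internal (Node l r) = Suc (internal l + internal r)"

fun leaves :: "ptree \<Rightarrow> nat" where
  "leaves Leaf = 1"
| "leaves (Node l r) = leaves l + leaves r"

definition Y :: "nat \<Rightarrow> ptree set" where
  "Y n = {t. internal t = n}"

datatype tok = LP | RP | X nat

fun expr :: "nat \<Rightarrow> ptree \<Rightarrow> tok list" where
  "expr k Leaf = [X k]"
| "expr k (Node l r) = [LP] @ expr k l @ expr (k + leaves l) r @ [RP]"

definition CE :: "nat \<Rightarrow> tok list set" where
  "CE n = expr 1 ` Y n"

text \<open>Number of left parentheses standing immediately to the left of x_j in w.\<close>
definition lp_before :: "tok list \<Rightarrow> nat \<Rightarrow> nat" where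
  "lp_before w j = length (takeWhile (\<lambda>c. c = LP) (rev (takeWhile (\<lambda>c. c \<noteq> X j) w)))"

text \<open>N_b^n as lists v of length n with 1 <= v!i <= i+1 (0-based positions).\<close>
definition Nb :: "nat \<Rightarrow> nat list set" where
  "Nb n = {v. length v = n \<and> (\<forall>i<n. 1 \<le> v ! i \<and> v ! i \<le> i + 1)}"

definition q :: "nat list \<Rightarrow> nat \<Rightarrow> nat" where
  "q v j = card {i. i < length v \<and> v ! i = j}"

definition has_counts :: "nat list \<Rightarrow> tok list \<Rightarrow> bool" where
  "has_counts v w \<longleftrightarrow> (\<forall>j\<in>{1..length v}. lp_before w j = q v j)
                        \<and> lp_before w (length v + 1) = 0"

definition Tree :: "nat list \<Rightarrow> ptree" where
  "Tree v = (THE t. t \<in> Y (length v) \<and>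
     expr 1 t = (THE w. w \<in> CE (length v) \<and> has_counts v w))"

end

(*
  Reading off, for every letter, the number of left parentheses standing immediately before it
  turns a tree t in Y n into a sequence of n + 1 naturals.  For a node, this sequence is the one of
  the left subtree with its first entry raised by one (the new outermost parenthesis), followed by
  the one of the right subtree.  Hence the map is injective (the first entry tells a leaf from a
  node), and its image is the set of ballot sequences: total sum n, and every prefix of length
  1 <= k <= n has sum at least k; the decomposition is inverted by cutting at the first prefix whose sum
  equals its length.  On the other side, the counts (q 1, ..., q (n + 1)) of v in N_b^n form a
  ballot sequence because v_i <= i, and every ballot sequence is attained by the nondecreasing word
  with q j letters j.  So the prescribed counts single out exactly one complete expression, and
  every tree arises.
*)
theory Submission imports Defs begin

(* lp_counts a t ! i is the number of left parentheses immediately before the (i+1)-st letter of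
   expr k t, when a further a left parentheses are written in front of the expression. *)
fun lp_counts :: "nat \<Rightarrow> ptree \<Rightarrow> nat list" where
  "lp_counts a Leaf = [a]"
| "lp_counts a (Node l r) = lp_counts (Suc a) l @ lp_counts 0 r"

lemma leaves_eq_Suc_internal: "leaves t = Suc (internal t)"
  by (induction t) auto

lemma length_lp_counts [simp]: "length (lp_counts a t) = leaves t"
  by (induction t arbitrary: a) auto

lemma sum_list_lp_counts: "sum_list (lp_counts a t) = a + internal t"
  by (induction t arbitrary: a) auto

lemma lp_counts_eq_Cons: "lp_counts a t = (a + hd (lp_counts 0 t)) # tl (lp_counts 0 t)"
proof (induction t arbitrary: a)
  case (Node l r)
  show ?case using Node.IH(1)[of "Suc a"] Node.IH(1)[of 1] by simp
qed simp

lemma lp_counts_neq_Nil [simp]: "lp_counts a t \<noteq> []"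
  by (induction t arbitrary: a) auto

lemma hd_lp_counts_append_eq_iff: "hd (lp_counts a t @ s) = a \<longleftrightarrow> t = Leaf"
  using lp_counts_eq_Cons[of "Suc a"] by (cases t) auto

lemma lp_counts_append_inj:
  "lp_counts a t1 @ s1 = lp_counts a t2 @ s2 \<Longrightarrow> t1 = t2 \<and> s1 = s2"
proof (induction t1 arbitrary: a t2 s1 s2)
  case Leaf
  then have "t2 = Leaf"
    using hd_lp_counts_append_eq_iff[of a Leaf s1] hd_lp_counts_append_eq_iff[of a t2 s2] by simp
  with Leaf.prems show ?case by simp
next
  case (Node l1 r1)
  have "t2 \<noteq> Leaf"
    using Node.prems hd_lp_counts_append_eq_iff[of a "Node l1 r1" s1]
      hd_lp_counts_append_eq_iff[of a t2 s2]
    by auto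
  then obtain l2 r2 where t2: "t2 = Node l2 r2" by (cases t2) auto
  with Node.prems have
    "lp_counts (Suc a) l1 @ lp_counts 0 r1 @ s1 = lp_counts (Suc a) l2 @ lp_counts 0 r2 @ s2"
    by simp
  then have "l1 = l2" and "lp_counts 0 r1 @ s1 = lp_counts 0 r2 @ s2"
    using Node.IH(1) by blast+
  then show ?case using Node.IH(2) t2 by blast
qed

lemma lp_counts_inj: "lp_counts a t1 = lp_counts a t2 \<Longrightarrow> t1 = t2"
  using lp_counts_append_inj[of a t1 "[]" t2 "[]"] by simp

lemma sum_list_take_lp_counts:
  "0 < k \<Longrightarrow> sum_list (take k (lp_counts a t)) = a + sum_list (take k (lp_counts 0 t))"
proof -
  obtain y ys where y: "lp_counts 0 t = y # ys" by (cases "lp_counts 0 t") auto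
  then have "lp_counts a t = (a + y) # ys" using lp_counts_eq_Cons[of a t] by simp
  with y show "0 < k \<Longrightarrow> ?thesis" by (cases k) auto
qed

definition ballot :: "nat \<Rightarrow> nat list \<Rightarrow> bool" where
  "ballot m c \<longleftrightarrow>
     length c = Suc m \<and> sum_list c = m \<and> (\<forall>k\<in>{1..m}. k \<le> sum_list (take k c))"

lemma sum_list_take_drop: "sum_list (take k xs) + sum_list (drop k xs) = sum_list xs"
  by (metis append_take_drop_id sum_list_append)

lemma ballot_last: "ballot m c \<Longrightarrow> c ! m = 0"
proof -
  assume c: "ballot m c"
  then have len: "length c = Suc m" by (simp add: ballot_def)
  then have "drop m c = [c ! m]" by (simp add: Cons_nth_drop_Suc [symmetric])
  then have "sum_list (take m c) + c ! m = m"
    using c sum_list_take_drop[of m c] by (simp add: ballot_def)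
  moreover have "m \<le> sum_list (take m c)"
    using c by (cases m) (auto simp: ballot_def)
  ultimately show ?thesis by simp
qed

lemma ballot_lp_counts: "ballot (internal t) (lp_counts 0 t)"
proof (induction t)
  case Leaf
  then show ?case by (simp add: ballot_def)
next
  case (Node l r)
  have "k \<le> sum_list (take k (lp_counts 1 l @ lp_counts 0 r))"
    if k: "1 \<le> k" "k \<le> Suc (internal l + internal r)" for k
  proof (cases "k \<le> leaves l")
    case True
    have "k - 1 \<le> sum_list (take k (lp_counts 0 l))"
    proof (cases "k = leaves l")
      case True
      then show ?thesis by (simp add: sum_list_lp_counts leaves_eq_Suc_internal)
    next
      case False
      then have "k \<in> {1..internal l}"
        using \<open>k \<le> leaves l\<close> k by (auto simp: leaves_eq_Suc_internal)
      then have "k \<le> sum_list (take k (lp_counts 0 l))"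
        using Node.IH(1) by (simp add: ballot_def)
      then show ?thesis by simp
    qed
    then show ?thesis using True k sum_list_take_lp_counts[of k 1 l] by simp
  next
    case False
    define k' where "k' = k - leaves l"
    have "k' \<in> {1..internal r}" using False k by (auto simp: k'_def leaves_eq_Suc_internal)
    then have "k' \<le> sum_list (take k' (lp_counts 0 r))"
      using Node.IH(2) by (auto simp: ballot_def)
    moreover have
      "take k (lp_counts 1 l @ lp_counts 0 r) = lp_counts 1 l @ take k' (lp_counts 0 r)"
      using False by (simp add: k'_def)
    ultimately show ?thesis using False
      by (simp add: k'_def sum_list_lp_counts leaves_eq_Suc_internal)
  qed
  then show ?case by (simp add: ballot_def sum_list_lp_counts leaves_eq_Suc_internal)
qed

lemma ballot_Suc_split:
  assumes "ballot (Suc m) c"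
  obtains l L R where "l \<le> m" "ballot l L" "ballot (m - l) R" "c = Suc (hd L) # tl L @ R"
proof -
  obtain x xs where c: "c = x # xs" using assms by (cases c) (auto simp: ballot_def)
  have len: "length xs = Suc m" and sum: "x + sum_list xs = Suc m"
    and pre: "\<And>k. 1 \<le> k \<Longrightarrow> k \<le> Suc m \<Longrightarrow> k \<le> sum_list (take k c)"
    using assms by (auto simp: ballot_def c)
  have sum_take_c: "sum_list (take (Suc k) c) = x + sum_list (take k xs)" for k
    by (simp add: c)
  have x: "1 \<le> x" using pre[of 1] by (simp add: c)
  \<comment> \<open>The left subtree ends where a prefix sum first equals the prefix length.\<close>
  define a where "a = (LEAST k. 1 \<le> k \<and> sum_list (take k c) = k)"
  have "1 \<le> Suc m \<and> sum_list (take (Suc m) c) = Suc m"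
    using pre[of "Suc m"] sum sum_take_c[of m] sum_list_take_drop[of m xs] by simp
  then have a: "1 \<le> a \<and> sum_list (take a c) = a" and "a \<le> Suc m"
    unfolding a_def by (rule LeastI, rule Least_le)
  have before_a: "Suc k \<le> sum_list (take k c)" if "1 \<le> k" "k < a" for k
    using pre[of k] not_less_Least[of k "\<lambda>k. 1 \<le> k \<and> sum_list (take k c) = k"]
      that \<open>a \<le> Suc m\<close>
    unfolding a_def[symmetric] by fastforce
  obtain l where l: "a = Suc l" "l \<le> m" using a \<open>a \<le> Suc m\<close> by (cases a) auto
  have sum_L: "x + sum_list (take l xs) = Suc l" using a sum_take_c[of l] l(1) by simp
  define L where "L = (x - 1) # take l xs"
  define R where "R = drop l xs"
  have "ballot l L"
    unfolding ballot_def
  proof (intro conjI ballI)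
    show "length L = Suc l" "sum_list L = l" using len l sum_L x by (auto simp: L_def)
    fix k assume k: "k \<in> {1..l}"
    then have "take k L = (x - 1) # take (k - 1) xs" by (cases k) (auto simp: L_def)
    moreover have "Suc k \<le> x + sum_list (take (k - 1) xs)"
      using before_a[of k] sum_take_c[of "k - 1"] k l by auto
    ultimately show "k \<le> sum_list (take k L)" by simp
  qed
  moreover have "ballot (m - l) R"
    unfolding ballot_def
  proof (intro conjI ballI)
    show "length R = Suc (m - l)" using len l by (simp add: R_def)
    show "sum_list R = m - l" using sum sum_L sum_list_take_drop[of l xs] by (simp add: R_def)
    fix k assume k: "k \<in> {1..m - l}"
    then have "Suc l + k \<le> Suc m" using l by auto
    then have "Suc l + k \<le> sum_list (take (Suc l + k) c)" using pre[of "Suc l + k"] by simp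
    moreover have "take (l + k) xs = take l xs @ take k R" by (simp add: R_def take_add)
    ultimately show "k \<le> sum_list (take k R)" using sum_take_c[of "l + k"] sum_L by simp
  qed
  moreover have "c = Suc (hd L) # tl L @ R" using x by (simp add: c L_def R_def)
  ultimately show ?thesis using that l(2) by blast
qed

lemma ballot_imp_lp_counts:
  assumes "ballot m c"
  shows "\<exists>t\<in>Y m. lp_counts 0 t = c"
proof -
  have "\<exists>t. lp_counts 0 t = c" using assms
  proof (induction m arbitrary: c rule: less_induct)
    case (less m)
    show ?case
    proof (cases m)
      case 0
      with less.prems have "c = [0]" by (cases c) (auto simp: ballot_def)
      then show ?thesis by (metis lp_counts.simps(1))
    next
      case (Suc m')
      with less.prems have "ballot (Suc m') c" by simp
      then obtain l L R where "l \<le> m'" and L: "ballot l L" and R: "ballot (m' - l) R"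
        and c: "c = Suc (hd L) # tl L @ R"
        by (rule ballot_Suc_split)
      then have "l < m" "m' - l < m" using Suc by auto
      obtain tl where "lp_counts 0 tl = L" using less.IH[OF \<open>l < m\<close> L] by blast
      moreover obtain tr where "lp_counts 0 tr = R" using less.IH[OF \<open>m' - l < m\<close> R] by blast
      ultimately have "lp_counts 0 (Node tl tr) = c"
        using lp_counts_eq_Cons[of 1 tl] by (simp add: c)
      then show ?thesis by blast
    qed
  qed
  then obtain t where t: "lp_counts 0 t = c" by blast
  then have "internal t = m"
    using assms length_lp_counts[of 0 t] by (simp add: ballot_def leaves_eq_Suc_internal)
  with t show ?thesis by (auto simp: Y_def)
qed

lemma X_in_set_exprD: "X j \<in> set (expr k t) \<Longrightarrow> k \<le> j \<and> j < k + leaves t"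
  by (induction t arbitrary: k) fastforce+

lemma expr_neq_Nil [simp]: "expr k t \<noteq> []"
  by (cases t) auto

lemma last_expr_neq_LP: "last (expr k t) \<noteq> LP"
  by (cases t) auto

lemma expr_append_inj: "expr k t1 @ s1 = expr k t2 @ s2 \<Longrightarrow> t1 = t2 \<and> s1 = s2"
proof (induction t1 arbitrary: k t2 s1 s2)
  case Leaf
  then show ?case by (cases t2) auto
next
  case (Node l1 r1)
  obtain l2 r2 where t2: "t2 = Node l2 r2" using Node.prems by (cases t2) auto
  with Node.prems have "expr k l1 @ expr (k + leaves l1) r1 @ RP # s1
      = expr k l2 @ expr (k + leaves l2) r2 @ RP # s2"
    by simp
  then have "l1 = l2"
    and "expr (k + leaves l1) r1 @ RP # s1 = expr (k + leaves l1) r2 @ RP # s2"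
    using Node.IH(1) by blast+
  then show ?case using Node.IH(2) t2 by blast
qed

lemma expr_inj: "expr k t1 = expr k t2 \<Longrightarrow> t1 = t2"
  using expr_append_inj[of k t1 "[]" t2 "[]"] by simp

lemma expr_split_at_letter:
  assumes "i < leaves t"
  obtains u w
  where "replicate a LP @ expr k t = u @ replicate (lp_counts a t ! i) LP @ X (k + i) # w"
    and "X (k + i) \<notin> set u" and "u = [] \<or> last u \<noteq> LP"
  using assms
proof (induction t arbitrary: a k i thesis)
  case Leaf
  then show ?case using Leaf.prems(1)[of "[]" "[]"] by simp
next
  case (Node l r)
  show ?case
  proof (cases "i < leaves l")
    case True
    then obtain u w
      where "replicate (Suc a) LP @ expr k l
          = u @ replicate (lp_counts (Suc a) l ! i) LP @ X (k + i) # w"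
      and "X (k + i) \<notin> set u" "u = [] \<or> last u \<noteq> LP"
      using Node.IH(1) by blast
    with True show ?thesis
      by (intro Node.prems(1)[of u "w @ expr (k + leaves l) r @ [RP]"])
        (auto simp: nth_append replicate_append_same[symmetric])
  next
    case False
    define i' where "i' = i - leaves l"
    with False Node.prems(2) have i: "i' < leaves r" "i = leaves l + i'" by auto
    then obtain u w
      where "expr (k + leaves l) r = u @ replicate (lp_counts 0 r ! i') LP @ X (k + leaves l + i') # w"
      and "X (k + leaves l + i') \<notin> set u" "u = [] \<or> last u \<noteq> LP"
      using Node.IH(2)[of 0 "k + leaves l" i'] by auto
    moreover have "X (k + i) \<notin> set (expr k l)" using X_in_set_exprD[of "k + i" k l] i by auto
    ultimately show ?thesis
      using i last_expr_neq_LP[of k l]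
      by (intro Node.prems(1)[of "replicate (Suc a) LP @ expr k l @ u" "w @ [RP]"])
        (auto simp: nth_append add.assoc replicate_append_same last_append)
  qed
qed

lemma lp_before_split:
  assumes "X j \<notin> set u" and "u = [] \<or> last u \<noteq> LP"
  shows "lp_before (u @ replicate m LP @ X j # w) j = m"
proof -
  have "takeWhile (\<lambda>c. c \<noteq> X j) (u @ replicate m LP @ X j # w)
      = u @ takeWhile (\<lambda>c. c \<noteq> X j) (replicate m LP @ X j # w)"
    by (rule takeWhile_append2) (use assms(1) in auto)
  also have "\<dots> = u @ replicate m LP"
    by (subst takeWhile_append2) auto
  finally have before_X:
    "takeWhile (\<lambda>c. c \<noteq> X j) (u @ replicate m LP @ X j # w) = u @ replicate m LP" .
  have "takeWhile (\<lambda>c. c = LP) (rev u) = []"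
    using assms(2) by (cases "rev u") (auto simp: last_rev[symmetric] dest: arg_cong[of _ _ rev])
  then have "takeWhile (\<lambda>c. c = LP) (replicate m LP @ rev u) = replicate m LP"
    by (subst takeWhile_append2) auto
  with before_X show ?thesis by (simp add: lp_before_def)
qed

lemma lp_before_expr:
  assumes "i < leaves t"
  shows "lp_before (expr k t) (k + i) = lp_counts 0 t ! i"
proof -
  obtain u w
    where "replicate 0 LP @ expr k t = u @ replicate (lp_counts 0 t ! i) LP @ X (k + i) # w"
    and "X (k + i) \<notin> set u" and "u = [] \<or> last u \<noteq> LP"
    using assms by (rule expr_split_at_letter)
  then show ?thesis by (simp add: lp_before_split)
qed

lemma q_eq_count_list: "q v j = count_list v j"
  unfolding q_def count_list_eq_length_filter length_filter_conv_card by metis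

fun word_of_counts :: "nat \<Rightarrow> nat list \<Rightarrow> nat list" where
  "word_of_counts j [] = []"
| "word_of_counts j (x # xs) = replicate x j @ word_of_counts (Suc j) xs"

lemma length_word_of_counts: "length (word_of_counts j c) = sum_list c"
  by (induction c arbitrary: j) auto

lemma set_word_of_counts: "set (word_of_counts j c) \<subseteq> {j..}"
  by (induction c arbitrary: j) fastforce+

lemma count_list_word_of_counts:
  "count_list (word_of_counts j c) i = (if j \<le> i \<and> i < j + length c then c ! (i - j) else 0)"
proof (induction c arbitrary: j)
  case (Cons x xs)
  have "count_list (replicate x j) i = (if i = j then x else 0)"
    by (induction x) auto
  with Cons[of "Suc j"] show ?case
    by (auto simp: nth_Cons' Suc_diff_Suc not_less_eq_eq)
qed simp

lemma nth_word_of_counts_le: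
  assumes "\<And>k. k < length c \<Longrightarrow> j + k \<le> d + sum_list (take k c)" and "i < sum_list c"
  shows "word_of_counts j c ! i \<le> i + d"
  using assms
proof (induction c arbitrary: j d i)
  case (Cons x xs)
  show ?case
  proof (cases "i < x")
    case True
    then show ?thesis using Cons.prems(1)[of 0] by (simp add: nth_append)
  next
    case False
    have "Suc j + k \<le> (d + x) + sum_list (take k xs)" if "k < length xs" for k
      using Cons.prems(1)[of "Suc k"] that by simp
    moreover have "i - x < sum_list xs" using Cons.prems(2) False by simp
    ultimately have "word_of_counts (Suc j) xs ! (i - x) \<le> (i - x) + (d + x)"
      by (rule Cons.IH)
    then show ?thesis using False by (simp add: nth_append length_word_of_counts)
  qed
qed simp

definition count_vector :: "nat \<Rightarrow> nat list \<Rightarrow> nat list" where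
  "count_vector n v = map (q v) [1..<n + 2]"

lemma sum_list_take_count_vector:
  "k \<le> Suc n \<Longrightarrow> sum_list (take k (count_vector n v)) = (\<Sum>j\<in>{1..k}. count_list v j)"
proof -
  assume "k \<le> Suc n"
  then have "take k (count_vector n v) = map (count_list v) [1..<Suc k]"
    by (simp add: count_vector_def take_map take_upt q_eq_count_list [abs_def] del: upt_Suc)
  then show ?thesis
    by (simp add: sum_set_upt_conv_sum_list_nat [symmetric] atLeastLessThanSuc_atLeastAtMost
        del: upt_Suc)
qed

lemma set_take_Nb:
  assumes "v \<in> Nb n"
  shows "set (take k v) \<subseteq> {1..k}"
proof
  fix x assume "x \<in> set (take k v)"
  then obtain i where "i < k" "i < n" "x = v ! i"
    using assms by (auto simp: Nb_def in_set_conv_nth)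
  then show "x \<in> {1..k}" using assms by (fastforce simp: Nb_def)
qed

lemma ballot_count_vector:
  assumes v: "v \<in> Nb n"
  shows "ballot n (count_vector n v)"
  unfolding ballot_def
proof (intro conjI ballI)
  have len: "length v = n" using v by (simp add: Nb_def)
  show "length (count_vector n v) = Suc n" by (simp add: count_vector_def)
  have "set v \<subseteq> {1..Suc n}" using set_take_Nb[OF v, of n] len by auto
  then show "sum_list (count_vector n v) = n"
    using sum_list_take_count_vector[of "Suc n" n v] sum_count_set[of v "{1..Suc n}"] len
    by (simp add: count_vector_def)
  fix k assume k: "k \<in> {1..n}"
  have "k = (\<Sum>j\<in>{1..k}. count_list (take k v) j)"
    using sum_count_set[OF set_take_Nb[OF v, of k]] k len by simp
  also have "\<dots> \<le> (\<Sum>j\<in>{1..k}. count_list v j)"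
    by (intro sum_mono) (metis append_take_drop_id count_list_append le_add1)
  also have "\<dots> = sum_list (take k (count_vector n v))"
    using sum_list_take_count_vector[of k n v] k by simp
  finally show "k \<le> sum_list (take k (count_vector n v))" .
qed

lemma ballot_imp_Nb:
  assumes c: "ballot n c"
  shows "\<exists>v\<in>Nb n. count_vector n v = c"
proof
  have len: "length c = Suc n" and "sum_list c = n"
    and pre: "\<And>k. k \<in> {1..n} \<Longrightarrow> k \<le> sum_list (take k c)"
    using c by (auto simp: ballot_def)
  have bound: "1 + k \<le> 1 + sum_list (take k c)" if "k < length c" for k
    using pre[of k] that len by (cases k) auto
  show "word_of_counts 1 c \<in> Nb n"
    unfolding Nb_def
  proof (intro CollectI conjI allI impI)
    show "length (word_of_counts 1 c) = n"
      using \<open>sum_list c = n\<close> by (simp add: length_word_of_counts)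
    fix i assume "i < n"
    then have "word_of_counts 1 c ! i \<in> set (word_of_counts 1 c)"
      using \<open>sum_list c = n\<close> by (simp add: length_word_of_counts)
    then show "1 \<le> word_of_counts 1 c ! i" using set_word_of_counts[of 1 c] by auto
    show "word_of_counts 1 c ! i \<le> i + 1"
      using nth_word_of_counts_le[OF bound] \<open>i < n\<close> \<open>sum_list c = n\<close> by simp
  qed
  show "count_vector n (word_of_counts 1 c) = c"
    using len
    by (intro nth_equalityI)
      (auto simp: count_vector_def q_eq_count_list count_list_word_of_counts simp del: upt_Suc)
qed

lemma has_counts_expr_iff:
  assumes v: "v \<in> Nb n" and t: "t \<in> Y n"
  shows "has_counts v (expr 1 t) \<longleftrightarrow> lp_counts 0 t = count_vector n v"
proof -
  have len: "length v = n" using v by (simp add: Nb_def)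
  have leaves: "leaves t = Suc n" using t by (simp add: Y_def leaves_eq_Suc_internal)
  have lp: "lp_before (expr 1 t) (Suc i) = lp_counts 0 t ! i" if "i \<le> n" for i
    using lp_before_expr[of i t 1] that leaves by simp
  have cv: "count_vector n v ! i = q v (Suc i)" if "i \<le> n" for i
    using that by (simp add: count_vector_def nth_append del: upt_Suc)
  have last: "lp_counts 0 t ! n = 0" "count_vector n v ! n = 0"
    using ballot_last ballot_lp_counts[of t] ballot_count_vector[OF v] t by (auto simp: Y_def)
  have "has_counts v (expr 1 t) \<longleftrightarrow> (\<forall>i<n. lp_counts 0 t ! i = count_vector n v ! i)"
  proof -
    have "(\<forall>j\<in>{1..n}. P j) \<longleftrightarrow> (\<forall>i<n. P (Suc i))" for P
      unfolding image_Suc_lessThan [symmetric] by auto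
    then show ?thesis using lp cv last len by (simp add: has_counts_def)
  qed
  also have "\<dots> \<longleftrightarrow> (\<forall>i\<le>n. lp_counts 0 t ! i = count_vector n v ! i)"
    using last by (auto simp: le_less)
  also have "\<dots> \<longleftrightarrow> lp_counts 0 t = count_vector n v"
    using leaves
    by (auto simp: list_eq_iff_nth_eq count_vector_def less_Suc_eq_le simp del: upt_Suc)
  finally show ?thesis .
qed

lemma CE_has_counts_iff:
  assumes v: "v \<in> Nb n" and t: "t \<in> Y n" and eq: "lp_counts 0 t = count_vector n v"
  shows "w \<in> CE n \<and> has_counts v w \<longleftrightarrow> w = expr 1 t"
proof
  assume "w \<in> CE n \<and> has_counts v w"
  then obtain t' where t': "t' \<in> Y n" "w = expr 1 t'" "has_counts v (expr 1 t')"
    by (auto simp: CE_def)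
  then have "lp_counts 0 t' = lp_counts 0 t" using has_counts_expr_iff[OF v t'(1)] eq by simp
  then show "w = expr 1 t" using lp_counts_inj t'(2) by blast
next
  assume "w = expr 1 t"
  then show "w \<in> CE n \<and> has_counts v w"
    using has_counts_expr_iff[OF v t] eq t by (simp add: CE_def)
qed

lemma Tree_eqI:
  assumes v: "v \<in> Nb n" and t: "t \<in> Y n" and eq: "lp_counts 0 t = count_vector n v"
  shows "Tree v = t"
proof -
  have "(THE w. w \<in> CE n \<and> has_counts v w) = expr 1 t"
    using CE_has_counts_iff[OF assms] by simp
  moreover have "length v = n" using v by (simp add: Nb_def)
  ultimately have "Tree v = (THE t'. t' \<in> Y n \<and> expr 1 t' = expr 1 t)"
    by (simp add: Tree_def)
  also have "\<dots> = t" using t expr_inj by blast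
  finally show ?thesis .
qed

theorem proposition1:
  fixes n :: nat
  assumes "n \<ge> 1"
  shows "(\<forall>v\<in>Nb n. \<exists>!w. w \<in> CE n \<and> has_counts v w) \<and> Tree ` Nb n = Y n"
proof -
  have tree: "\<exists>t\<in>Y n. lp_counts 0 t = count_vector n v" if "v \<in> Nb n" for v
    using ballot_imp_lp_counts[OF ballot_count_vector[OF that]] .
  have "\<exists>!w. w \<in> CE n \<and> has_counts v w" if v: "v \<in> Nb n" for v
  proof -
    obtain t where "t \<in> Y n" "lp_counts 0 t = count_vector n v" using tree[OF v] ..
    then show ?thesis using CE_has_counts_iff[OF v] by simp
  qed
  moreover have "Tree ` Nb n \<subseteq> Y n"
  proof (rule image_subsetI)
    fix v assume v: "v \<in> Nb n"
    then obtain t where "t \<in> Y n" "lp_counts 0 t = count_vector n v" using tree by blast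
    then show "Tree v \<in> Y n" using Tree_eqI[OF v] by simp
  qed
  moreover have "Y n \<subseteq> Tree ` Nb n"
  proof
    fix t assume t: "t \<in> Y n"
    then obtain v where "v \<in> Nb n" "count_vector n v = lp_counts 0 t"
      using ballot_imp_Nb ballot_lp_counts[of t] by (auto simp: Y_def)
    with t show "t \<in> Tree ` Nb n" using Tree_eqI[of v n t] by force
  qed
  ultimately show ?thesis by blast
qed

end
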